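(* Let $p\in(0,\infty)$, let $u\in\mathbb{S}^{n-1}$, let $H=\{x\in\mathbb{R}^n:\langle x,u\rangle=0\}$, and let $K\subset\mathbb{R}^n$ be a compact set with non-empty interior. Let $f:\mathbb{R}\to\mathbb{R}_{\geq0}$, $f(t)=\mathrm{vol}_{n-1}\bigl(K\cap(tu+H)\bigr)$, be $p$-concave, with support $[a,b]$, and assume $a=-b$ (i.e. the midpoint $\frac{a+b}{2}u$ of $K$ in direction $u$ is the origin). Let $K^-=K\cap\{x:\langle x,u\rangle\leq0\}$. Then \[\frac{\mathrm{vol}(K^-)}{\mathrm{vol}(K)}\geq\left(\frac12\right)^{(p+1)/p}.\]
   Context: $\mathrm{vol}_k$ denotes $k$-dimensional Lebesgue measure, $\mathrm{vol}=\mathrm{vol}_n$. A function $\varphi\geq0$ is $p$-concave ($p>0$) if $\varphi((1-\lambda)x+\lambda y)\geq((1-\lambda)\varphi(x)^p+\lambda\varphi(y)^p)^{1/p}$ whenever $\varphi(x)\varphi(y)>0$, $\lambda\in(0,1)$; equivalently $\varphi^p$ is concave on its support. The support of $f$ is an interval $[a,b]$ with $f>0$ on $(a,b)$. *)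

theory Defs
  imports "HOL-Analysis.Analysis"
begin

text \<open>Euclidean space R^n is modelled as real \<times> 'b, where 'b is an arbitrary
Euclidean space of dimension n-1. The (n-1)-dimensional volume of a subset of the
affine hyperplane t u + u-perp is computed by pulling it back along an
(arbitrarily chosen) orthogonal transformation Q with Q (1,0) = u, which maps
{0} \<times> 'b isometrically onto u-perp; Lebesgue measure on 'b is rotation invariant,
so the value does not depend on the choice of Q.\<close>

definition hyp_param :: "real \<times> 'b::euclidean_space \<Rightarrow> 'b \<Rightarrow> real \<times> 'b" where
  "hyp_param u = (let Q = (SOME Q :: real \<times> 'b \<Rightarrow> real \<times> 'b. orthogonal_transformation Q \<and> Q (1, 0) = u)
                  in (\<lambda>y. Q (0, y)))"

definition section_vol :: "(real \<times> 'b::euclidean_space) set \<Rightarrow> real \<times> 'b \<Rightarrow> real \<Rightarrow> real" where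
  "section_vol K u t = measure lebesgue {y. t *\<^sub>R u + hyp_param u y \<in> K}"

definition p_concave :: "real \<Rightarrow> (real \<Rightarrow> real) \<Rightarrow> bool" where
  "p_concave p \<phi> \<longleftrightarrow> (\<forall>x y l. \<phi> x * \<phi> y > 0 \<longrightarrow> 0 < l \<longrightarrow> l < 1 \<longrightarrow>
      \<phi> ((1 - l) * x + l * y) \<ge> ((1 - l) * \<phi> x powr p + l * \<phi> y powr p) powr (1 / p))"

end

theory Submission
  imports Defs
begin

text \<open>Rotating \<open>u\<close> onto the first coordinate axis turns the sections of \<open>K\<close> into the
  fibres \<open>{y. (t, y) \<in> K'}\<close> of a congruent body \<open>K'\<close>, so by Cavalieri's principle
  \<open>vol K = \<integral> f\<close> and \<open>vol K\<^sup>- = \<integral>\<^bsub>t \<le> 0\<^esub> f\<close>. Concavity of \<open>f\<^sup>p\<close> on \<open>(-b, b)\<close>, applied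
  between \<open>x\<close> and points near \<open>-b\<close>, gives \<open>f ((x - b) / 2) \<ge> 2 powr (-1/p) * f x\<close>. The
  substitution \<open>t = (x - b) / 2\<close> maps \<open>[-b, b]\<close> onto \<open>[-b, 0]\<close> with Jacobian \<open>1/2\<close>, whence
  \<open>\<integral>\<^bsub>t \<le> 0\<^esub> f \<ge> 2 powr (-1 - 1/p) * \<integral> f\<close>.\<close>

typedef (overloaded) ('a::euclidean_space) basis_index = "Basis :: 'a set"
  morphisms basis_vector Abs_basis_index
  using nonempty_Basis by blast

instance basis_index :: (euclidean_space) finite
proof
  have "UNIV = Abs_basis_index ` (Basis :: 'a set)"
    by (simp add: type_definition.univ[OF type_definition_basis_index])
  then show "finite (UNIV :: 'a basis_index set)"
    by (metis finite_Basis finite_imageI)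
qed

text \<open>The change-of-variables results for Lebesgue measure are stated for \<open>real^'n\<close>
  with \<open>'n::{finite,wellorder}\<close>; any order on the basis index will do.\<close>

instantiation basis_index :: (euclidean_space) wellorder
begin

definition less_eq_basis_index :: "'a basis_index \<Rightarrow> 'a basis_index \<Rightarrow> bool"
  where "less_eq_basis_index i j \<longleftrightarrow> to_nat i \<le> to_nat j"

definition less_basis_index :: "'a basis_index \<Rightarrow> 'a basis_index \<Rightarrow> bool"
  where "less_basis_index i j \<longleftrightarrow> to_nat i < to_nat j"

instance
proof
  fix i j :: "'a basis_index" and P :: "'a basis_index \<Rightarrow> bool"
  show "i \<le> j \<Longrightarrow> j \<le> i \<Longrightarrow> i = j"
    by (simp add: less_eq_basis_index_def)
  show "(\<And>i. (\<And>j. j < i \<Longrightarrow> P j) \<Longrightarrow> P i) \<Longrightarrow> P i"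
    unfolding less_basis_index_def using measure_induct_rule[of to_nat P i] by blast
qed (auto simp: less_eq_basis_index_def less_basis_index_def)

end

lemma basis_vector_inner:
  "basis_vector i \<bullet> basis_vector j = (if i = j then 1 else 0)"
  using basis_vector[of i] basis_vector[of j]
  by (simp add: inner_Basis basis_vector_inject)

lemma range_basis_vector: "range basis_vector = Basis"
  by (rule type_definition.Rep_range[OF type_definition_basis_index])

lemma inj_basis_vector: "inj basis_vector"
  by (meson injI basis_vector_inject)

definition of_coords :: "real^('a::euclidean_space basis_index) \<Rightarrow> 'a"
  where "of_coords x = (\<Sum>i\<in>UNIV. (x $ i) *\<^sub>R basis_vector i)"

definition coords :: "'a::euclidean_space \<Rightarrow> real^('a basis_index)"
  where "coords y = (\<chi> i. y \<bullet> basis_vector i)"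

lemma of_coords_inner_basis_vector: "of_coords x \<bullet> basis_vector j = x $ j"
  by (simp add: of_coords_def inner_sum_left basis_vector_inner if_distrib cong: if_cong)

lemma coords_of_coords [simp]: "coords (of_coords x) = x"
  by (simp add: coords_def of_coords_inner_basis_vector vec_eq_iff)

lemma of_coords_coords [simp]: "of_coords (coords y) = y"
proof -
  have "of_coords (coords y) = (\<Sum>i\<in>UNIV. (y \<bullet> basis_vector i) *\<^sub>R basis_vector i)"
    by (simp add: of_coords_def coords_def)
  also have "\<dots> = (\<Sum>b\<in>Basis. (y \<bullet> b) *\<^sub>R b)"
    using sum.reindex[OF inj_basis_vector, of "\<lambda>b. (y \<bullet> b) *\<^sub>R b"]
    by (simp add: range_basis_vector o_def)
  finally show ?thesis
    by (simp add: euclidean_representation)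
qed

lemma linear_of_coords: "linear of_coords"
  by (rule linearI) (simp_all add: of_coords_def scaleR_add_left sum.distrib scaleR_sum_right)

lemma linear_coords: "linear coords"
  by (rule linearI) (simp_all add: coords_def vec_eq_iff inner_add_left)

lemma inner_of_coords: "of_coords x \<bullet> of_coords y = x \<bullet> y"
  by (simp add: of_coords_def[of x] inner_sum_left inner_vec_def
      inner_commute[of "basis_vector _"] of_coords_inner_basis_vector)

lemma inner_coords: "coords x \<bullet> coords y = x \<bullet> y"
  by (metis of_coords_coords inner_of_coords)

lemma continuous_on_of_coords: "continuous_on A of_coords"
  by (rule linear_continuous_on[OF linear_conv_bounded_linear[THEN iffD1, OF linear_of_coords]])

lemma continuous_on_coords: "continuous_on A coords"
  by (rule linear_continuous_on[OF linear_conv_bounded_linear[THEN iffD1, OF linear_coords]])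

lemma borel_measurable_of_coords [measurable]: "of_coords \<in> borel_measurable borel"
  by (intro borel_measurable_continuous_onI continuous_on_of_coords)

lemma borel_measurable_coords [measurable]: "coords \<in> borel_measurable borel"
  by (intro borel_measurable_continuous_onI continuous_on_coords)

lemma of_coords_image: "of_coords ` T = coords -` T"
  by (auto simp: image_iff) (metis of_coords_coords)

lemma coords_image: "coords ` S = of_coords -` S"
  by (auto simp: image_iff) (metis coords_of_coords)

lemma distr_lborel_of_coords: "distr lborel borel of_coords = (lborel :: 'a::euclidean_space measure)"
proof (rule lborel_eqI[symmetric])
  fix l u :: 'a
  assume lu: "\<And>b. b \<in> Basis \<Longrightarrow> l \<bullet> b \<le> u \<bullet> b"
  have all_Basis: "(\<forall>b\<in>Basis. P b) \<longleftrightarrow> (\<forall>i. P (basis_vector i))" for P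
    by (metis range_basis_vector rangeE rangeI)
  have box: "of_coords -` box l u = box (coords l) (coords u)"
    by (auto simp: set_eq_iff mem_box_cart mem_box all_Basis coords_def of_coords_inner_basis_vector)
  have "cbox (coords l) (coords u) \<noteq> {}"
    using lu basis_vector by (auto simp: interval_ne_empty_cart(1) coords_def)
  then have "measure lborel (cbox (coords l) (coords u)) = (\<Prod>i\<in>UNIV. (u - l) \<bullet> basis_vector i)"
    by (simp add: content_cbox_cart coords_def inner_diff_left)
  then have "emeasure lborel (box (coords l) (coords u)) = (\<Prod>i\<in>UNIV. (u - l) \<bullet> basis_vector i)"
    by (simp add: emeasure_lborel_box_eq emeasure_lborel_cbox_eq measure_lborel_cbox_eq
        emeasure_eq_ennreal_measure)
  also have "\<dots> = (\<Prod>b\<in>Basis. (u - l) \<bullet> b)"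
    using prod.reindex[OF inj_basis_vector, of "\<lambda>b. (u - l) \<bullet> b"]
    by (simp add: range_basis_vector o_def)
  finally show "emeasure (distr lborel borel of_coords) (box l u) = (\<Prod>b\<in>Basis. (u - l) \<bullet> b)"
    by (simp add: emeasure_distr box)
qed simp

lemma emeasure_lborel_of_coords_image:
  assumes "T \<in> sets borel"
  shows "emeasure lborel (of_coords ` T) = emeasure lborel T"
proof -
  have "of_coords ` T \<in> sets borel"
    unfolding of_coords_image using measurable_sets[OF borel_measurable_coords assms] by simp
  moreover have "of_coords -` of_coords ` T = T"
    by (auto simp: image_iff) (metis coords_of_coords)
  ultimately have "emeasure (distr lborel borel of_coords) (of_coords ` T) = emeasure lborel T"
    by (simp add: emeasure_distr)
  then show ?thesis
    by (simp add: distr_lborel_of_coords)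
qed

lemma emeasure_lborel_coords_image:
  assumes "S \<in> sets borel"
  shows "emeasure lborel (coords ` S) = emeasure lborel S"
proof -
  have "coords ` S \<in> sets borel"
    unfolding coords_image using measurable_sets[OF borel_measurable_of_coords assms] by simp
  moreover have "of_coords ` coords ` S = S"
    by (auto simp: image_iff)
  ultimately show ?thesis
    using emeasure_lborel_of_coords_image by metis
qed

lemma orthogonal_transformation_coords_conj:
  "orthogonal_transformation Q \<Longrightarrow> orthogonal_transformation (coords \<circ> Q \<circ> of_coords)"
  by (auto simp: orthogonal_transformation_def inner_coords inner_of_coords
      intro!: linear_compose linear_coords linear_of_coords)

lemma orthogonal_transformation_of_coords_conj:
  "orthogonal_transformation Q \<Longrightarrow> orthogonal_transformation (of_coords \<circ> Q \<circ> coords)"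
  by (auto simp: orthogonal_transformation_def inner_coords inner_of_coords
      intro!: linear_compose linear_coords linear_of_coords)

lemma orthogonal_transformation_exists_euclidean:
  fixes u v :: "'a::euclidean_space"
  assumes "norm u = norm v"
  obtains Q where "orthogonal_transformation Q" "Q u = v"
proof -
  have "norm (coords u) = norm (coords v)"
    using assms by (simp add: norm_eq_sqrt_inner inner_coords)
  then obtain Q where "orthogonal_transformation Q" "Q (coords u) = coords v"
    using orthogonal_transformation_exists by metis
  then show thesis
    using orthogonal_transformation_of_coords_conj that by fastforce
qed

lemma compact_linear_image:
  fixes f :: "'a::euclidean_space \<Rightarrow> 'b::real_normed_vector"
  shows "linear f \<Longrightarrow> compact S \<Longrightarrow> compact (f ` S)"
  by (simp add: compact_continuous_image linear_continuous_on linear_conv_bounded_linear)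

text \<open>Rotation invariance of Lebesgue measure is available only on \<open>real^'n\<close>;
  it is transported along the isometry \<open>coords\<close>.\<close>

lemma measure_orthogonal_image_compact:
  fixes Q :: "'a::euclidean_space \<Rightarrow> 'a"
  assumes Q: "orthogonal_transformation Q" and S: "compact S"
  shows "measure lebesgue (Q ` S) = measure lebesgue S"
proof -
  define Q' where "Q' = coords \<circ> Q \<circ> of_coords"
  have Q': "orthogonal_transformation Q'"
    unfolding Q'_def using Q by (rule orthogonal_transformation_coords_conj)
  have cS: "compact (coords ` S)"
    using S linear_coords by (rule compact_linear_image[rotated])
  have cQ'S: "compact (Q' ` coords ` S)"
    using cS Q' orthogonal_transformation_linear by (blast intro: compact_linear_image)
  have cQS: "compact (Q ` S)"
    using S Q orthogonal_transformation_linear by (blast intro: compact_linear_image)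
  have "Q ` S = of_coords ` Q' ` coords ` S"
    by (auto simp: Q'_def image_iff)
  then have "measure lebesgue (Q ` S) = measure lborel (Q' ` coords ` S)"
    using cQS cQ'S
    by (simp add: measure_def emeasure_lborel_of_coords_image borel_compact)
  also have "\<dots> = measure lebesgue (coords ` S)"
    using measure_orthogonal_image[OF Q' lmeasurable_compact[OF cS]] cQ'S
    by (simp add: borel_compact)
  also have "\<dots> = measure lebesgue S"
    using cS S by (simp add: borel_compact measure_def emeasure_lborel_coords_image)
  finally show ?thesis .
qed

lemma
  fixes Q :: "'a::euclidean_space \<Rightarrow> 'a"
  assumes Q: "orthogonal_transformation Q" and S: "compact S"
  shows compact_orthogonal_vimage: "compact (Q -` S)"
    and measure_orthogonal_vimage_compact: "measure lebesgue (Q -` S) = measure lebesgue S"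
proof -
  have "Q -` S = inv Q ` S"
    using Q by (simp add: bij_vimage_eq_inv_image orthogonal_transformation_bij)
  moreover have "orthogonal_transformation (inv Q)"
    using Q by (rule orthogonal_transformation_inv)
  ultimately show "compact (Q -` S)" "measure lebesgue (Q -` S) = measure lebesgue S"
    using S by (simp_all add: compact_linear_image orthogonal_transformation_linear
        measure_orthogonal_image_compact)
qed

lemma p_concave_chord_bound:
  assumes p: "0 < p" and f: "p_concave p f" and fx: "0 < f x" and fy: "0 < f y"
    and yz: "y < z" and zx: "z < x"
  shows "((z - y) / (x - y)) powr (1 / p) * f x \<le> f z"
proof -
  define l where "l = (x - z) / (x - y)"
  have l: "0 < l" "l < 1" "1 - l = (z - y) / (x - y)"
    using yz zx by (auto simp: l_def field_simps)
  have comb: "(1 - l) * x + l * y = z"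
    using yz zx by (simp add: l_def algebra_simps) (simp add: field_simps)
  have "((z - y) / (x - y)) powr (1 / p) * f x = ((1 - l) * f x powr p) powr (1 / p)"
    unfolding l(3)[symmetric] using l(1,2) p fx by (simp add: powr_mult powr_powr)
  also have "\<dots> \<le> ((1 - l) * f x powr p + l * f y powr p) powr (1 / p)"
    using l(1,2) p by (intro powr_mono2) auto
  also have "\<dots> \<le> f z"
    using f fx fy l comb unfolding p_concave_def by (metis mult_pos_pos)
  finally show ?thesis .
qed

text \<open>Since \<open>f\<close> may vanish at \<open>-b\<close>, the chord bound is taken with \<open>y > -b\<close> and \<open>y \<rightarrow> -b\<close>;
  the weight \<open>(z - y) / (x - y)\<close> then tends to \<open>1/2\<close> as \<open>z\<close> is the midpoint of \<open>-b\<close> and \<open>x\<close>.\<close>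

lemma p_concave_midpoint_bound:
  assumes p: "0 < p" and f: "p_concave p f" and pos: "\<forall>t\<in>{-b<..<b}. 0 < f t"
    and x: "-b < x" "x < b"
  shows "(1 / 2) powr (1 / p) * f x \<le> f ((x - b) / 2)"
proof -
  define z where "z = (x - b) / 2"
  have "-b < z" "z < x"
    using x by (auto simp: z_def)
  have "((\<lambda>y. ((z - y) / (x - y)) powr (1 / p) * f x) \<longlongrightarrow>
      ((z + b) / (x + b)) powr (1 / p) * f x) (at_right (-b))"
    using x \<open>-b < z\<close> by (auto intro!: tendsto_eq_intros)
  moreover have "\<forall>\<^sub>F y in at_right (-b). ((z - y) / (x - y)) powr (1 / p) * f x \<le> f z"
    using eventually_at_right_real[OF \<open>-b < z\<close>]
  proof eventually_elim
    case (elim y)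
    then show ?case
      using \<open>z < x\<close> x pos by (intro p_concave_chord_bound[OF p f]) auto
  qed
  ultimately have "((z + b) / (x + b)) powr (1 / p) * f x \<le> f z"
    by (intro tendsto_le[OF trivial_limit_at_right_real tendsto_const])
  moreover have "(z + b) / (x + b) = 1 / 2"
    using x by (simp add: z_def field_simps)
  ultimately show ?thesis
    by (metis z_def)
qed

lemma p_concave_nn_integral_left_half:
  fixes f :: "real \<Rightarrow> real"
  assumes p: "0 < p" and f: "p_concave p f"
    and [measurable]: "f \<in> borel_measurable borel" and nonneg: "\<And>t. 0 \<le> f t"
    and supp: "\<forall>t. f t \<noteq> 0 \<longrightarrow> t \<in> {-b..b}" and pos: "\<forall>t\<in>{-b<..<b}. 0 < f t"
  shows "ennreal ((1 / 2) powr ((p + 1) / p)) * (\<integral>\<^sup>+t. f t \<partial>lborel)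
           \<le> (\<integral>\<^sup>+t. ennreal (f t) * indicator {..0} t \<partial>lborel)"
proof -
  define c where "c = (1 / 2) powr (1 / p)"
  have exponent: "(1 / 2) powr ((p + 1) / p) = 1 / 2 * c"
    using p by (simp add: c_def add_divide_distrib powr_add)
  have "ennreal ((1 / 2) powr ((p + 1) / p)) * (\<integral>\<^sup>+t. f t \<partial>lborel)
      = ennreal (1 / 2) * (ennreal c * (\<integral>\<^sup>+t. f t \<partial>lborel))"
    unfolding exponent by (subst ennreal_mult) (simp_all add: c_def mult.assoc)
  also have "\<dots> = ennreal (1 / 2) * (\<integral>\<^sup>+x. ennreal (c * f x) \<partial>lborel)"
    by (simp add: c_def ennreal_mult nonneg nn_integral_cmult)
  also have "\<dots> \<le> ennreal (1 / 2) * (\<integral>\<^sup>+x. ennreal (f ((x - b) / 2)) * indicator {..0} ((x - b) / 2) \<partial>lborel)"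
  proof (intro mult_left_mono nn_integral_mono_AE)
    show "AE x in lborel. ennreal (c * f x) \<le> ennreal (f ((x - b) / 2)) * indicator {..0} ((x - b) / 2)"
      using AE_lborel_singleton[of b] AE_lborel_singleton[of "-b"]
    proof eventually_elim
      case (elim x)
      show ?case
      proof (cases "-b < x \<and> x < b")
        case True
        then show ?thesis
          using p_concave_midpoint_bound[OF p f pos] by (auto simp: c_def ennreal_leI)
      next
        case False
        then have "f x = 0"
          using supp elim by force
        then show ?thesis
          by simp
      qed
    qed
  qed simp
  also have "\<dots> = (\<integral>\<^sup>+t. ennreal (f t) * indicator {..0} t \<partial>lborel)"
    using nn_integral_real_affine[of "\<lambda>t. ennreal (f t) * indicator {..0} t" "1 / 2" "-b / 2"]
    by (simp add: diff_divide_distrib)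
  finally show ?thesis .
qed

lemma hyp_param_orthogonal_transformation:
  fixes u :: "real \<times> 'b::euclidean_space"
  assumes "norm u = 1"
  obtains Q where "orthogonal_transformation Q" "Q (1, 0) = u"
    and "\<And>t y. t *\<^sub>R u + hyp_param u y = Q (t, y)"
proof -
  define Q where "Q = (SOME Q :: real \<times> 'b \<Rightarrow> real \<times> 'b. orthogonal_transformation Q \<and> Q (1, 0) = u)"
  have "\<exists>Q :: real \<times> 'b \<Rightarrow> real \<times> 'b. orthogonal_transformation Q \<and> Q (1, 0) = u"
    using orthogonal_transformation_exists_euclidean[of "(1, 0)" u] assms by auto
  then have Q: "orthogonal_transformation Q" "Q (1, 0) = u"
    unfolding Q_def by (metis (mono_tags, lifting) someI_ex)+
  have param: "hyp_param u y = Q (0, y)" for y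
    by (simp add: hyp_param_def Q_def Let_def)
  have "t *\<^sub>R u + hyp_param u y = Q (t, y)" for t y
  proof -
    have "Q (t, y) = Q (t *\<^sub>R (1, 0) + (0, y))"
      by simp
    also have "\<dots> = t *\<^sub>R Q (1, 0) + Q (0, y)"
      using orthogonal_transformation_linear[OF Q(1)] by (simp only: linear_add linear_scale)
    finally show ?thesis
      by (simp add: Q(2) param)
  qed
  with Q that show thesis
    by blast
qed

lemma compact_Pair_vimage:
  fixes K :: "('a::real_normed_vector \<times> 'b::real_normed_vector) set"
  assumes "compact K"
  shows "compact (Pair t -` K)"
proof -
  have "compact (K \<inter> {z. fst z = t})"
    using assms by (intro compact_Int_closed closed_Collect_eq continuous_intros)
  then have "compact (snd ` (K \<inter> {z. fst z = t}))"
    by (intro compact_continuous_image continuous_intros)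
  also have "snd ` (K \<inter> {z. fst z = t}) = Pair t -` K"
    by force
  finally show ?thesis .
qed

lemma emeasure_lborel_compact:
  assumes "compact S"
  shows "emeasure lborel S = ennreal (measure lebesgue S)"
proof -
  have "emeasure lborel S \<noteq> \<infinity>"
    using emeasure_compact_finite[OF assms] by simp
  then show ?thesis
    using assms by (simp add: emeasure_eq_ennreal_measure borel_compact)
qed

lemma
  fixes K :: "('a::euclidean_space \<times> 'b::euclidean_space) set"
  assumes "compact K"
  shows borel_measurable_measure_Pair_vimage:
      "(\<lambda>t. measure lebesgue (Pair t -` K)) \<in> borel_measurable borel"
    and emeasure_compact_eq_nn_integral_sections:
      "emeasure lborel K = (\<integral>\<^sup>+t. measure lebesgue (Pair t -` K) \<partial>lborel)"
proof -
  have K: "K \<in> sets (lborel \<Otimes>\<^sub>M lborel)"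
    unfolding lborel_prod using assms by (simp add: borel_compact)
  have fibre: "emeasure lborel (Pair t -` K) = measure lebesgue (Pair t -` K)" for t
    using compact_Pair_vimage[OF assms] by (rule emeasure_lborel_compact)
  show "(\<lambda>t. measure lebesgue (Pair t -` K)) \<in> borel_measurable borel"
    using lborel.measurable_emeasure_Pair[OF K] by (simp add: fibre)
  show "emeasure lborel K = (\<integral>\<^sup>+t. measure lebesgue (Pair t -` K) \<partial>lborel)"
    using lborel.emeasure_pair_measure_alt[OF K] by (simp add: fibre lborel_prod)
qed

lemma measure_left_half_ge_of_p_concave_sections:
  fixes K :: "(real \<times> 'b::euclidean_space) set"
  assumes K: "compact K" and p: "0 < p"
    and f: "p_concave p (\<lambda>t. measure lebesgue (Pair t -` K))"
    and supp: "\<forall>t. measure lebesgue (Pair t -` K) \<noteq> 0 \<longrightarrow> t \<in> {-b..b}"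
    and pos: "\<forall>t\<in>{-b<..<b}. 0 < measure lebesgue (Pair t -` K)"
  shows "(1 / 2) powr ((p + 1) / p) * measure lebesgue K
           \<le> measure lebesgue (K \<inter> {z. fst z \<le> 0})"
proof -
  define L where "L = K \<inter> {z. fst z \<le> 0}"
  have L: "compact L"
    unfolding L_def using K by (intro compact_Int_closed closed_Collect_le continuous_intros)
  have "ennreal (measure lebesgue (Pair t -` L))
      = ennreal (measure lebesgue (Pair t -` K)) * indicator {..0} t" for t
    by (cases "t \<le> 0") (auto simp: L_def vimage_def)
  then have "emeasure lborel L
      = (\<integral>\<^sup>+t. ennreal (measure lebesgue (Pair t -` K)) * indicator {..0} t \<partial>lborel)"
    using emeasure_compact_eq_nn_integral_sections[OF L] by (simp only:)
  moreover have "emeasure lborel K = (\<integral>\<^sup>+t. measure lebesgue (Pair t -` K) \<partial>lborel)"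
    by (rule emeasure_compact_eq_nn_integral_sections[OF K])
  ultimately have "ennreal ((1 / 2) powr ((p + 1) / p)) * emeasure lborel K \<le> emeasure lborel L"
    using p_concave_nn_integral_left_half[OF p f borel_measurable_measure_Pair_vimage[OF K]
        measure_nonneg supp pos] by simp
  then show ?thesis
    unfolding L_def[symmetric] by (simp add: emeasure_lborel_compact K L ennreal_mult[symmetric])
qed

lemma measure_pos_of_interior_nonempty:
  assumes "S \<in> lmeasurable" "interior S \<noteq> {}"
  shows "0 < measure lebesgue S"
proof (rule ccontr)
  assume "\<not> 0 < measure lebesgue S"
  then have "negligible S"
    using assms(1) measure_nonneg[of lebesgue S] by (simp add: negligible_iff_measure0)
  then have "negligible (interior S)"
    using interior_subset negligible_subset by blast
  then show False
    using assms(2) open_not_negligible by blast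
qed

lemma section_vol_eq_sections_of_rotation:
  fixes K :: "(real \<times> 'b::euclidean_space) set" and u :: "real \<times> 'b"
  assumes u: "norm u = 1" and K: "compact K"
  obtains K' :: "(real \<times> 'b) set"
    where "compact K'" "measure lebesgue K' = measure lebesgue K"
    and "section_vol K u = (\<lambda>t. measure lebesgue (Pair t -` K'))"
    and "measure lebesgue (K' \<inter> {z. fst z \<le> 0}) = measure lebesgue (K \<inter> {x. x \<bullet> u \<le> 0})"
proof -
  obtain Q where Q: "orthogonal_transformation Q" "Q (1, 0) = u"
    and param: "\<And>t y. t *\<^sub>R u + hyp_param u y = Q (t, y)"
    using hyp_param_orthogonal_transformation[OF u] by blast
  define K' where "K' = Q -` K"
  have "fst z = Q z \<bullet> u" for z
  proof -
    have "Q z \<bullet> Q (1, 0) = z \<bullet> (1, 0)"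
      using Q(1) unfolding orthogonal_transformation_def by blast
    then show ?thesis
      using Q(2) by (cases z) simp
  qed
  then have half: "K' \<inter> {z. fst z \<le> 0} = Q -` (K \<inter> {x. x \<bullet> u \<le> 0})"
    by (auto simp: K'_def)
  have "compact (K \<inter> {x. x \<bullet> u \<le> 0})"
    using K by (intro compact_Int_closed closed_Collect_le continuous_intros)
  then have vol_half:
    "measure lebesgue (K' \<inter> {z. fst z \<le> 0}) = measure lebesgue (K \<inter> {x. x \<bullet> u \<le> 0})"
    unfolding half by (rule measure_orthogonal_vimage_compact[OF Q(1)])
  have sections: "section_vol K u = (\<lambda>t. measure lebesgue (Pair t -` K'))"
    by (simp add: fun_eq_iff section_vol_def param K'_def vimage_def)
  have "compact K'" "measure lebesgue K' = measure lebesgue K"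
    unfolding K'_def using Q(1) K
    by (rule compact_orthogonal_vimage, rule measure_orthogonal_vimage_compact)
  then show thesis
    by (rule that[OF _ _ sections vol_half])
qed

theorem proposition2p1:
  fixes K :: "(real \<times> 'b::euclidean_space) set"
    and u :: "real \<times> 'b" and p a b :: real and f :: "real \<Rightarrow> real"
  assumes "0 < p"
    and "norm u = 1"
    and "compact K" and "interior K \<noteq> {}"
    and "f = section_vol K u"
    and "p_concave p f"
    and "a < b"
    and "\<forall>t. f t \<noteq> 0 \<longrightarrow> t \<in> {a..b}"
    and "\<forall>t\<in>{a<..<b}. f t > 0"
    and "a = - b"
  shows "measure lebesgue (K \<inter> {x. x \<bullet> u \<le> 0}) / measure lebesgue K
           \<ge> (1 / 2) powr ((p + 1) / p)"
proof -
  obtain K' :: "(real \<times> 'b) set"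
    where K': "compact K'" and vol: "measure lebesgue K' = measure lebesgue K"
    and sections: "section_vol K u = (\<lambda>t. measure lebesgue (Pair t -` K'))"
    and vol_half: "measure lebesgue (K' \<inter> {z. fst z \<le> 0}) = measure lebesgue (K \<inter> {x. x \<bullet> u \<le> 0})"
    by (rule section_vol_eq_sections_of_rotation[OF assms(2,3)])
  have "(1 / 2) powr ((p + 1) / p) * measure lebesgue K' \<le> measure lebesgue (K' \<inter> {z. fst z \<le> 0})"
    using assms(1,6,8,9) unfolding assms(5,10) sections
    by (rule measure_left_half_ge_of_p_concave_sections[OF K'])
  then have "(1 / 2) powr ((p + 1) / p) * measure lebesgue K \<le> measure lebesgue (K \<inter> {x. x \<bullet> u \<le> 0})"
    unfolding vol vol_half .
  moreover have "0 < measure lebesgue K"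
    using assms(3,4) by (intro measure_pos_of_interior_nonempty lmeasurable_compact)
  ultimately show ?thesis
    by (simp add: le_divide_eq)
qed

end
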